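(* Let $d\in\mathbb{N}$ and $M(t)=t\log(e+t)$, $t>0$. For every measurable $f$ on $\mathbb{R}^d\setminus\mathbb{B}^d$, $$\|f\|_{L_M(\mathbb{R}^d\setminus\mathbb{B}^d)}\leq\|Vf\|_{L_M(\mathbb{B}^d)}.$$
   Context: $\mathbb{B}^d$ is the unit ball in $\mathbb{R}^d$; all spaces carry Lebesgue measure. $(Vf)(t)=|t|^{-2d}f(t/|t|^2)$. For a measurable set $\Omega$, $\|g\|_{L_M(\Omega)}=\inf\{\lambda>0:\int_\Omega M(|g|/\lambda)\le1\}$. *)

theory Defs
  imports "HOL-Analysis.Analysis"
begin

definition orlicz_M :: "real \<Rightarrow> real" where
  "orlicz_M t = t * ln (exp 1 + t)"

text \<open>Luxemburg norm on a measurable set, with values in [0, \<infinity>] (inf of empty set = \<infinity>).\<close>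
definition luxemburg_norm :: "(real \<Rightarrow> real) \<Rightarrow> 'a::euclidean_space set \<Rightarrow> ('a \<Rightarrow> real) \<Rightarrow> ennreal" where
  "luxemburg_norm M \<Omega> g =
     Inf {ennreal l | l. l > 0 \<and> (\<integral>\<^sup>+ x \<in> \<Omega>. ennreal (M (\<bar>g x\<bar> / l)) \<partial>lebesgue) \<le> 1}"

definition kelvinV :: "('a::euclidean_space \<Rightarrow> real) \<Rightarrow> 'a \<Rightarrow> real" where
  "kelvinV f t = norm t powr (- 2 * real DIM('a)) * f ((1 / (norm t)\<^sup>2) *\<^sub>R t)"

end

theory Submission
  imports Defs
begin

(*
  The inversion t -> t / |t|^2 maps the punctured unit ball onto the exterior of the unit
  ball; its derivative at t is |t|^(-2) times a hyperplane reflection, so its Jacobian is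
  |t|^(-2d).  By the change of variables formula the modular of f / l on the exterior is
  at most the integral over the ball of |t|^(-2d) M(|f (t / |t|^2)| / l).  On the ball
  |t|^(-2d) >= 1, and s M(a) <= M(s a) for s >= 1 because M(t) / t is nondecreasing, so this
  is at most the modular of V f / l on the ball.  Hence every l admissible in the Luxemburg
  norm of V f is admissible for f.
*)

definition inversion :: "'a::real_inner \<Rightarrow> 'a"
  where "inversion x = (1 / (norm x)\<^sup>2) *\<^sub>R x"

definition hyperplane_reflection :: "'a::real_inner \<Rightarrow> 'a \<Rightarrow> 'a"
  where "hyperplane_reflection x h = h - (2 * (x \<bullet> h) / (norm x)\<^sup>2) *\<^sub>R x"

lemma norm_inversion [simp]: "norm (inversion x) = 1 / norm x"
  by (cases "x = 0") (simp_all add: inversion_def power2_eq_square)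

lemma inversion_inversion [simp]: "inversion (inversion x) = x"
  by (cases "x = 0") (simp_all add: inversion_def power2_eq_square)

lemma inversion_0 [simp]: "inversion 0 = 0"
  by (simp add: inversion_def)

lemma inversion_eq_0_iff [simp]: "inversion x = 0 \<longleftrightarrow> x = 0"
  by (simp add: inversion_def)

lemma linear_isometry_inversion:
  assumes "linear L" "\<And>x. norm (L x) = norm x"
  shows "L (inversion x) = inversion (L x)"
  using assms by (simp add: inversion_def linear_scale)

lemma has_derivative_inversion:
  fixes x :: "'a::real_inner"
  assumes "x \<noteq> 0"
  shows "(inversion has_derivative (\<lambda>h. (1 / (norm x)\<^sup>2) *\<^sub>R hyperplane_reflection x h))
    (at x within S)"
proof -
  have inversion_eq: "inversion = (\<lambda>y. inverse (y \<bullet> y) *\<^sub>R y)"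
    by (simp add: fun_eq_iff inversion_def power2_norm_eq_inner divide_inverse)
  have xx: "x \<bullet> x \<noteq> 0"
    using assms by simp
  have "((\<lambda>y. y \<bullet> y) has_derivative (\<lambda>h. 2 * (x \<bullet> h))) (at x within S)"
    by (rule has_derivative_eq_rhs[OF has_derivative_inner[OF has_derivative_ident has_derivative_ident]])
      (simp add: fun_eq_iff inner_commute)
  from has_derivative_scaleR[OF Deriv.has_derivative_inverse[OF xx this] has_derivative_ident]
  show ?thesis
    unfolding inversion_eq
    by (rule has_derivative_eq_rhs)
       (use xx in \<open>auto simp: fun_eq_iff hyperplane_reflection_def power2_norm_eq_inner field_simps
          inner_commute scaleR_diff_right\<close>)
qed

lemma orthogonal_transformation_hyperplane_reflection:
  "orthogonal_transformation (hyperplane_reflection x)"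
  unfolding orthogonal_transformation_def
proof
  show "linear (hyperplane_reflection x)"
    unfolding hyperplane_reflection_def
    by (intro linearI) (simp_all add: inner_add_right add_divide_distrib scaleR_add_left algebra_simps)
  show "\<forall>v w. hyperplane_reflection x v \<bullet> hyperplane_reflection x w = v \<bullet> w"
  proof (cases "x = 0")
    case False
    then have "x \<bullet> x \<noteq> 0"
      by simp
    then show ?thesis
      by (simp add: hyperplane_reflection_def power2_norm_eq_inner inner_diff_left inner_diff_right
          inner_commute field_simps)
  qed (simp add: hyperplane_reflection_def)
qed

lemma abs_det_inversion_derivative:
  fixes x :: "real ^ 'n"
  assumes "x \<noteq> 0"
  shows "\<bar>det (matrix (\<lambda>h. (1 / (norm x)\<^sup>2) *\<^sub>R hyperplane_reflection x h))\<bar>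
    = norm x powr (- 2 * real CARD('n))"
proof -
  let ?R = "hyperplane_reflection x"
  have R: "orthogonal_transformation ?R"
    by (rule orthogonal_transformation_hyperplane_reflection)
  have "matrix (\<lambda>h. (1 / (norm x)\<^sup>2) *\<^sub>R ?R h) = matrix (\<lambda>h. (1 / (norm x)\<^sup>2) *\<^sub>R h) ** matrix ?R"
    using matrix_compose[OF orthogonal_transformation_linear[OF R] linear_scaleR] by (simp add: o_def)
  then have "\<bar>det (matrix (\<lambda>h. (1 / (norm x)\<^sup>2) *\<^sub>R ?R h))\<bar> = (1 / (norm x)\<^sup>2) ^ CARD('n)"
    using R by (simp add: det_mul abs_mult)
  also have "\<dots> = inverse (norm x ^ (2 * CARD('n)))"
    by (simp add: power_mult power_one_over divide_inverse power_inverse)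
  also have "\<dots> = norm x powr (- 2 * real CARD('n))"
    using assms by (simp add: powr_minus powr_realpow[symmetric])
  finally show ?thesis .
qed

lemma inversion_measurable: "inversion \<in> (lebesgue :: 'a::euclidean_space measure) \<rightarrow>\<^sub>M lebesgue"
proof (rule measurableI)
  fix A :: "'a set"
  assume A: "A \<in> sets lebesgue"
  have "inversion differentiable_on (A - {0})"
    using has_derivative_inversion by (auto simp: differentiable_on_def differentiable_def)
  then have "inversion ` (A - {0}) \<in> sets lebesgue"
    using A by (intro differentiable_image_in_sets_lebesgue) auto
  moreover have "inversion -` A = inversion ` (A - {0}) \<union> (A \<inter> {0})"
  proof -
    have "inversion -` A = inversion ` A"
    proof (intro equalityI subsetI)
      fix y
      assume "y \<in> inversion -` A"
      then show "y \<in> inversion ` A"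
        using image_eqI[of y inversion "inversion y"] by simp
    qed auto
    moreover have "inversion ` (A \<inter> {0}) = A \<inter> {0}"
      by auto
    ultimately show ?thesis
      by (metis Un_Diff_Int image_Un)
  qed
  ultimately show "inversion -` A \<inter> space lebesgue \<in> sets lebesgue"
    using A by (simp add: sets.Un sets.Int)
qed simp

lemma set_nn_integral_lebesgue_eq_integral:
  fixes f :: "'a::euclidean_space \<Rightarrow> real"
  assumes f: "f integrable_on A" and nonneg: "\<And>x. x \<in> A \<Longrightarrow> 0 \<le> f x"
  shows "(\<integral>\<^sup>+x\<in>A. ennreal (f x) \<partial>lebesgue) = ennreal (integral A f)"
proof -
  have "((\<lambda>x. if x \<in> A then f x else 0) has_integral integral A f) UNIV"
    using integrable_integral[OF f] by (simp add: has_integral_restrict_UNIV)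
  then have "(\<integral>\<^sup>+x. ennreal (if x \<in> A then f x else 0) \<partial>lebesgue) = ennreal (integral A f)"
    using nonneg by (subst (asm) has_integral_iff_nn_integral_lebesgue) auto
  moreover have "(\<integral>\<^sup>+x\<in>A. ennreal (f x) \<partial>lebesgue)
      = (\<integral>\<^sup>+x. ennreal (if x \<in> A then f x else 0) \<partial>lebesgue)"
    by (intro nn_integral_cong) (simp add: indicator_def)
  ultimately show ?thesis
    by simp
qed

lemma nn_integral_on_image_ubound:
  fixes f :: "real ^ 'n::{finite,wellorder} \<Rightarrow> real" and g :: "real ^ 'n::_ \<Rightarrow> real ^ 'n::_"
  assumes der_g: "\<And>x. x \<in> S \<Longrightarrow> (g has_derivative g' x) (at x within S)"
    and nonneg: "\<And>y. 0 \<le> f y"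
    and meas: "(\<lambda>x. indicator S x * (\<bar>det (matrix (g' x))\<bar> * f (g x)))
      \<in> borel_measurable lebesgue"
  shows "(\<integral>\<^sup>+y\<in>g ` S. ennreal (f y) \<partial>lebesgue)
    \<le> (\<integral>\<^sup>+x\<in>S. ennreal (\<bar>det (matrix (g' x))\<bar> * f (g x)) \<partial>lebesgue)"
proof (cases "(\<integral>\<^sup>+x\<in>S. ennreal (\<bar>det (matrix (g' x))\<bar> * f (g x)) \<partial>lebesgue) = \<infinity>")
  case False
  define D where "D x = \<bar>det (matrix (g' x))\<bar> * f (g x)" for x
  have D_nonneg: "0 \<le> D x" for x
    by (simp add: D_def nonneg)
  have "(\<integral>\<^sup>+x. ennreal (indicator S x * D x) \<partial>lebesgue) < \<infinity>"
    using False by (simp add: D_def top.not_eq_extremum indicator_mult_ennreal mult.commute)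
  then have "integrable lebesgue (\<lambda>x. indicator S x * D x)"
    using meas D_nonneg by (intro integrableI_nonneg) (simp_all add: D_def)
  then have "(\<lambda>x. if x \<in> S then D x else 0) integrable_on UNIV"
    by (auto dest: integrable_on_lebesgue simp: indicator_times_eq_if)
  then have D_int: "D integrable_on S"
    by (simp add: integrable_restrict_UNIV)
  have "f integrable_on g ` S \<and> integral (g ` S) f \<le> integral S D"
    unfolding D_def using nonneg der_g D_int[unfolded D_def] by (rule integral_on_image_ubound_nonneg)
  then show ?thesis
    using D_int D_nonneg nonneg
    by (simp add: set_nn_integral_lebesgue_eq_integral D_def[symmetric] ennreal_leI)
qed simp

lemma borel_measurable_powr_norm_times_inversion:
  fixes f :: "'a::euclidean_space \<Rightarrow> real"
  assumes "f \<in> borel_measurable lebesgue"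
  shows "(\<lambda>t. norm t powr c * f (inversion t)) \<in> borel_measurable lebesgue"
proof (rule borel_measurable_times)
  show "(\<lambda>t::'a. norm t powr c) \<in> borel_measurable lebesgue"
    by (rule measurable_completion) simp
  show "(\<lambda>t. f (inversion t)) \<in> borel_measurable lebesgue"
    using measurable_comp[OF inversion_measurable assms] by (simp add: o_def)
qed

lemma nn_integral_le_inversion_cart:
  fixes f :: "real ^ 'n::{finite,wellorder} \<Rightarrow> real"
  assumes f: "f \<in> borel_measurable lebesgue" and nonneg: "\<And>x. 0 \<le> f x"
  shows "(\<integral>\<^sup>+x. f x \<partial>lebesgue)
    \<le> (\<integral>\<^sup>+t. ennreal (norm t powr (- 2 * real CARD('n)) * f (inversion t)) \<partial>lebesgue)"
proof -
  let ?w = "\<lambda>t::real ^ 'n::{finite,wellorder}. norm t powr (- 2 * real CARD('n))"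
  let ?D = "\<lambda>t h::real ^ 'n::{finite,wellorder}. (1 / (norm t)\<^sup>2) *\<^sub>R hyperplane_reflection t h"
  let ?S = "- {0 :: real ^ 'n::{finite,wellorder}}"
  have S: "inversion ` ?S = ?S"
    by (auto intro: rev_image_eqI[where f = inversion and x = "inversion x" for x])
  have det: "\<bar>det (matrix (?D t))\<bar> = ?w t" if "t \<in> ?S" for t
    using that by (simp add: abs_det_inversion_derivative)
  have "(\<integral>\<^sup>+x. f x \<partial>lebesgue) = (\<integral>\<^sup>+x\<in>?S. f x \<partial>lebesgue)"
    by (intro nn_integral_cong_AE AE_I'[of "{0}"]) (auto simp: indicator_def)
  also have "\<dots> = (\<integral>\<^sup>+x\<in>inversion ` ?S. f x \<partial>lebesgue)"
    by (simp only: S)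
  also have "\<dots> \<le> (\<integral>\<^sup>+t\<in>?S. ennreal (\<bar>det (matrix (?D t))\<bar> * f (inversion t)) \<partial>lebesgue)"
  proof (rule nn_integral_on_image_ubound)
    show "(inversion has_derivative ?D t) (at t within ?S)" if "t \<in> ?S" for t
      using that by (intro has_derivative_inversion) auto
    have "(\<lambda>t. indicator ?S t * (?w t * f (inversion t))) \<in> borel_measurable lebesgue"
      by (intro borel_measurable_times[OF borel_measurable_indicator]
          borel_measurable_powr_norm_times_inversion f) auto
    then show "(\<lambda>t. indicator ?S t * (\<bar>det (matrix (?D t))\<bar> * f (inversion t))) \<in> borel_measurable lebesgue"
      by (rule measurable_cong[THEN iffD1, rotated]) (auto simp: det indicator_def)
  qed (rule nonneg)
  also have "\<dots> \<le> (\<integral>\<^sup>+t. ennreal (?w t * f (inversion t)) \<partial>lebesgue)"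
    by (intro nn_integral_mono) (auto simp: det indicator_def)
  finally show ?thesis .
qed

lemma inner_linear_Basis_permutation:
  fixes L :: "'a::euclidean_space \<Rightarrow> 'b::euclidean_space"
  assumes L: "linear L" "bij_betw L Basis Basis"
  shows "L x \<bullet> L y = x \<bullet> y"
proof -
  have LB: "L b \<in> Basis" if "b \<in> Basis" for b
    using L that by (auto simp: bij_betw_def)
  have inj: "inj_on L Basis"
    using L by (simp add: bij_betw_def)
  have on_Basis: "L x \<bullet> L b = x \<bullet> b" if b: "b \<in> Basis" for x b
  proof -
    have "L x = (\<Sum>c\<in>Basis. (x \<bullet> c) *\<^sub>R L c)"
      by (subst euclidean_representation[symmetric, of x]) (simp add: L linear_sum linear_scale)
    then have "L x \<bullet> L b = (\<Sum>c\<in>Basis. (x \<bullet> c) * (L c \<bullet> L b))"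
      by (simp add: inner_sum_left)
    also have "\<dots> = (\<Sum>c\<in>Basis. if c = b then x \<bullet> c else 0)"
      using b LB inj by (intro sum.cong) (auto simp: inner_Basis inj_on_eq_iff)
    finally show ?thesis
      using b by simp
  qed
  have "L x \<bullet> L y = (\<Sum>b\<in>Basis. (L x \<bullet> b) * (L y \<bullet> b))"
    by (rule euclidean_inner)
  also have "\<dots> = (\<Sum>b\<in>Basis. (L x \<bullet> L b) * (L y \<bullet> L b))"
    using sum.reindex_bij_betw[OF L(2), of "\<lambda>b. (L x \<bullet> b) * (L y \<bullet> b)"] by simp
  also have "\<dots> = x \<bullet> y"
    by (simp add: on_Basis euclidean_inner[of x y])
  finally show ?thesis .
qed

lemma norm_linear_Basis_permutation:
  fixes L :: "'a::euclidean_space \<Rightarrow> 'b::euclidean_space"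
  assumes "linear L" "bij_betw L Basis Basis"
  shows "norm (L x) = norm x"
  using inner_linear_Basis_permutation[OF assms, of x x] by (simp add: norm_eq_sqrt_inner)

lemma lborel_distr_linear_Basis_permutation:
  fixes L :: "'a::euclidean_space \<Rightarrow> 'b::euclidean_space"
  assumes L: "linear L" "bij_betw L Basis Basis"
  shows "distr lborel borel L = lborel"
proof (rule lborel_eqI[symmetric])
  fix l u :: 'b
  assume lu: "\<And>b. b \<in> Basis \<Longrightarrow> l \<bullet> b \<le> u \<bullet> b"
  have LB: "L b \<in> Basis" if "b \<in> Basis" for b
    using L that by (auto simp: bij_betw_def)
  define l' :: 'a where "l' = (\<Sum>b\<in>Basis. (l \<bullet> L b) *\<^sub>R b)"
  define u' :: 'a where "u' = (\<Sum>b\<in>Basis. (u \<bullet> L b) *\<^sub>R b)"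
  have l': "l' \<bullet> b = l \<bullet> L b" and u': "u' \<bullet> b = u \<bullet> L b" if "b \<in> Basis" for b
    using that by (simp_all add: l'_def u'_def inner_sum_left inner_Basis if_distrib cong: if_cong)
  have "L x \<in> box l u \<longleftrightarrow> x \<in> box l' u'" for x
  proof -
    have "L x \<in> box l u \<longleftrightarrow> (\<forall>b\<in>L ` Basis. l \<bullet> b < L x \<bullet> b \<and> L x \<bullet> b < u \<bullet> b)"
      using L(2) by (simp add: mem_box bij_betw_def)
    also have "\<dots> \<longleftrightarrow> x \<in> box l' u'"
      by (simp add: mem_box l' u' inner_linear_Basis_permutation[OF L])
    finally show ?thesis .
  qed
  then have preimage: "L -` box l u = box l' u'"
    by auto
  have "L \<in> borel_measurable borel"
    using L(1) by (intro borel_measurable_continuous_onI linear_continuous_on linear_conv_bounded_linear[THEN iffD1])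
  then have "emeasure (distr lborel borel L) (box l u) = emeasure lborel (box l' u')"
    by (simp add: emeasure_distr preimage)
  also have "\<dots> = (\<Prod>b\<in>Basis. (u' - l') \<bullet> b)"
    by (rule emeasure_lborel_box) (simp add: l' u' lu LB)
  also have "\<dots> = (\<Prod>b\<in>Basis. (u - l) \<bullet> L b)"
    by (intro arg_cong[where f = ennreal] prod.cong) (simp_all add: inner_diff_left l' u')
  also have "\<dots> = (\<Prod>b\<in>Basis. (u - l) \<bullet> b)"
    by (simp only: prod.reindex_bij_betw[OF L(2)])
  finally show "emeasure (distr lborel borel L) (box l u) = (\<Prod>b\<in>Basis. (u - l) \<bullet> b)" .
qed simp

lemma lebesgue_distr_linear_Basis_permutation:
  fixes L :: "'a::euclidean_space \<Rightarrow> 'b::euclidean_space"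
  assumes L: "linear L" "bij_betw L Basis Basis"
  shows "L \<in> lebesgue \<rightarrow>\<^sub>M lebesgue" and "distr lebesgue lebesgue L = lebesgue"
proof -
  have "L \<in> borel_measurable borel"
    using L(1) by (intro borel_measurable_continuous_onI linear_continuous_on linear_conv_bounded_linear[THEN iffD1])
  then have L_lborel: "L \<in> lborel \<rightarrow>\<^sub>M lborel"
    by simp
  have "distr lebesgue lborel L = distr lborel lborel L"
    by (rule distr_completion[OF L_lborel])
  also have "\<dots> = distr lborel borel L"
    by (rule distr_cong) simp_all
  finally have distr_eq: "distr lebesgue lborel L = lborel"
    by (simp add: lborel_distr_linear_Basis_permutation[OF L])
  have L_lebesgue: "L \<in> lebesgue \<rightarrow>\<^sub>M lborel"
    using L_lborel by (rule measurable_completion)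
  show "L \<in> lebesgue \<rightarrow>\<^sub>M lebesgue"
    by (rule completion.measurable_completion2[OF L_lebesgue]) (simp add: distr_eq)
  have "completion (distr lebesgue lborel L) = distr lebesgue (completion lborel) L"
    by (rule completion.completion_distr_eq[OF L_lebesgue]) (simp add: distr_eq)
  then show "distr lebesgue lebesgue L = lebesgue"
    by (simp add: distr_eq)
qed

(*
  The change of variables theorems of HOL-Analysis are stated for real ^ 'n with
  'n :: {finite, wellorder}.  Indexing coordinates by the basis vectors turns any Euclidean
  space into such a space; the order on the index type is arbitrary.
*)
typedef (overloaded) 'a basis_index = "Basis :: 'a::euclidean_space set"
  morphisms basis_vector Abs_basis_index
  using nonempty_Basis by blast

instance basis_index :: (euclidean_space) finite
proof
  have "(UNIV :: 'a basis_index set) = Abs_basis_index ` Basis"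
    using type_definition.Abs_image[OF type_definition_basis_index] by (rule sym)
  then show "finite (UNIV :: 'a basis_index set)"
    by (metis finite_Basis finite_imageI)
qed

instantiation basis_index :: (euclidean_space) linorder
begin

definition less_eq_basis_index :: "'a basis_index \<Rightarrow> 'a basis_index \<Rightarrow> bool"
  where "less_eq_basis_index i j \<longleftrightarrow> to_nat i \<le> to_nat j"

definition less_basis_index :: "'a basis_index \<Rightarrow> 'a basis_index \<Rightarrow> bool"
  where "less_basis_index i j \<longleftrightarrow> to_nat i < to_nat j"

instance
proof
  fix i j k :: "'a basis_index"
  show "i < j \<longleftrightarrow> i \<le> j \<and> \<not> j \<le> i"
    unfolding less_eq_basis_index_def less_basis_index_def by linarith
  show "i \<le> i"
    by (simp add: less_eq_basis_index_def)
  show "i \<le> j \<Longrightarrow> j \<le> k \<Longrightarrow> i \<le> k"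
    unfolding less_eq_basis_index_def by (rule le_trans)
  show "i \<le> j \<Longrightarrow> j \<le> i \<Longrightarrow> i = j"
    unfolding less_eq_basis_index_def by (metis le_antisym to_nat_split)
  show "i \<le> j \<or> j \<le> i"
    unfolding less_eq_basis_index_def by (rule nat_le_linear)
qed

end

instance basis_index :: (euclidean_space) wellorder
proof
  fix P :: "'a basis_index \<Rightarrow> bool" and i
  assume step: "\<And>i. (\<And>j. j < i \<Longrightarrow> P j) \<Longrightarrow> P i"
  show "P i"
    by (induction i rule: measure_induct_rule[of to_nat]) (rule step, simp add: less_basis_index_def)
qed

lemma card_basis_index: "CARD('a::euclidean_space basis_index) = DIM('a)"
  using type_definition.card[OF type_definition_basis_index] by simp

definition euclidean_of_vec :: "real ^ 'a basis_index \<Rightarrow> 'a::euclidean_space"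
  where "euclidean_of_vec x = (\<Sum>i\<in>UNIV. x $ i *\<^sub>R basis_vector i)"

lemma linear_euclidean_of_vec: "linear euclidean_of_vec"
  unfolding euclidean_of_vec_def
  by (intro linearI) (simp_all add: scaleR_add_left sum.distrib scaleR_sum_right)

lemma euclidean_of_vec_axis: "euclidean_of_vec (axis i 1) = basis_vector i"
proof -
  have "euclidean_of_vec (axis i 1) = (\<Sum>j\<in>UNIV. if j = i then basis_vector j else 0)"
    unfolding euclidean_of_vec_def by (intro sum.cong) (simp_all add: axis_def)
  then show ?thesis
    by simp
qed

lemma bij_betw_euclidean_of_vec_Basis:
  "bij_betw (euclidean_of_vec :: real ^ 'a basis_index \<Rightarrow> 'a::euclidean_space) Basis Basis"
proof (rule bij_betw_imageI)
  have Basis_vec: "(Basis :: (real ^ 'a basis_index) set) = range (\<lambda>i. axis i 1)"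
    by (auto simp: Basis_vec_def)
  have "inj (\<lambda>i::'a basis_index. euclidean_of_vec (axis i 1) :: 'a)"
    by (simp add: euclidean_of_vec_axis basis_vector_inject inj_on_def)
  then show "inj_on (euclidean_of_vec :: _ \<Rightarrow> 'a) Basis"
    by (auto simp: Basis_vec inj_on_def)
  show "euclidean_of_vec ` Basis = (Basis :: 'a set)"
    using type_definition.Rep_range[OF type_definition_basis_index]
    by (simp add: Basis_vec image_image euclidean_of_vec_axis)
qed

lemmas norm_euclidean_of_vec =
  norm_linear_Basis_permutation[OF linear_euclidean_of_vec bij_betw_euclidean_of_vec_Basis]

lemmas lebesgue_distr_euclidean_of_vec =
  lebesgue_distr_linear_Basis_permutation[OF linear_euclidean_of_vec bij_betw_euclidean_of_vec_Basis]

lemma nn_integral_le_inversion: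
  fixes f :: "'a::euclidean_space \<Rightarrow> real"
  assumes f: "f \<in> borel_measurable lebesgue" and nonneg: "\<And>x. 0 \<le> f x"
  shows "(\<integral>\<^sup>+x. f x \<partial>lebesgue)
    \<le> (\<integral>\<^sup>+t. ennreal (norm t powr (- 2 * real DIM('a)) * f (inversion t)) \<partial>lebesgue)"
proof -
  let ?E = "euclidean_of_vec :: real ^ 'a basis_index \<Rightarrow> 'a"
  let ?F = "\<lambda>t::'a. norm t powr (- 2 * real DIM('a)) * f (inversion t)"
  have E_measurable: "?E \<in> lebesgue \<rightarrow>\<^sub>M lebesgue"
    by (rule lebesgue_distr_euclidean_of_vec(1))
  have E_inversion: "?E (inversion y) = inversion (?E y)" for y
    by (rule linear_isometry_inversion[OF linear_euclidean_of_vec norm_euclidean_of_vec])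
  have F_measurable: "?F \<in> borel_measurable lebesgue"
    using f by (rule borel_measurable_powr_norm_times_inversion)
  have "(\<integral>\<^sup>+x. f x \<partial>lebesgue) = (\<integral>\<^sup>+y. f (?E y) \<partial>lebesgue)"
    using nn_integral_distr[OF E_measurable, of "\<lambda>x. ennreal (f x)"] f
    by (simp add: lebesgue_distr_euclidean_of_vec(2))
  also have "\<dots> \<le> (\<integral>\<^sup>+y. ennreal (norm y powr (- 2 * real CARD('a basis_index))
      * f (?E (inversion y))) \<partial>lebesgue)"
  proof (rule nn_integral_le_inversion_cart[of "\<lambda>y. f (?E y)", OF _ nonneg])
    show "(\<lambda>y. f (?E y)) \<in> borel_measurable lebesgue"
      using measurable_comp[OF E_measurable f] by (simp add: o_def)
  qed
  also have "\<dots> = (\<integral>\<^sup>+y. ?F (?E y) \<partial>lebesgue)"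
    by (simp add: card_basis_index norm_euclidean_of_vec E_inversion)
  also have "\<dots> = (\<integral>\<^sup>+t. ?F t \<partial>lebesgue)"
    using nn_integral_distr[OF E_measurable, of "\<lambda>t. ennreal (?F t)"] F_measurable
    by (simp add: lebesgue_distr_euclidean_of_vec(2))
  finally show ?thesis .
qed

lemma kelvinV_eq_inversion:
  "kelvinV f (t::'a::euclidean_space) = norm t powr (- 2 * real DIM('a)) * f (inversion t)"
  by (simp add: kelvinV_def inversion_def)

lemma nn_integral_kelvinV_le:
  fixes f :: "'a::euclidean_space \<Rightarrow> real" and M :: "real \<Rightarrow> real"
  assumes M_borel: "M \<in> borel_measurable borel"
    and M_nonneg: "\<And>t. 0 \<le> t \<Longrightarrow> 0 \<le> M t"
    and M_superhomogeneous: "\<And>s t. 1 \<le> s \<Longrightarrow> 0 \<le> t \<Longrightarrow> s * M t \<le> M (s * t)"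
    and f: "f \<in> borel_measurable (lebesgue_on (- ball 0 1))"
  shows "(\<integral>\<^sup>+x\<in>- ball 0 1. ennreal (M \<bar>f x\<bar>) \<partial>lebesgue)
    \<le> (\<integral>\<^sup>+t\<in>ball 0 1. ennreal (M \<bar>kelvinV f t\<bar>) \<partial>lebesgue)"
proof -
  let ?w = "\<lambda>t::'a. norm t powr (- 2 * real DIM('a))"
  define h where "h x = indicator (- ball 0 1) x * M \<bar>f x\<bar>" for x :: 'a
  have h_nonneg: "0 \<le> h x" for x
    by (simp add: h_def M_nonneg)
  have exterior: "- ball (0::'a) 1 \<in> sets lebesgue"
    by auto
  have "(\<lambda>x. indicator (- ball 0 1) x *\<^sub>R f x) \<in> borel_measurable lebesgue"
    using f by (subst (asm) borel_measurable_restrict_space_iff) auto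
  then have "(\<lambda>x. M \<bar>indicator (- ball 0 1) x *\<^sub>R f x\<bar>) \<in> borel_measurable lebesgue"
    using M_borel by (intro measurable_compose[OF borel_measurable_abs])
  then have "(\<lambda>x. indicator (- ball 0 1) x * M \<bar>indicator (- ball 0 1) x *\<^sub>R f x\<bar>)
      \<in> borel_measurable lebesgue"
    using exterior by (intro borel_measurable_times borel_measurable_indicator)
  moreover have "h = (\<lambda>x. indicator (- ball 0 1) x * M \<bar>indicator (- ball 0 1) x *\<^sub>R f x\<bar>)"
    by (auto simp: fun_eq_iff h_def indicator_def)
  ultimately have h_measurable: "h \<in> borel_measurable lebesgue"
    by simp
  have "AE t::'a in lebesgue. norm t \<noteq> 1"
    using negligible_sphere[of "0::'a" 1]
    by (intro AE_I'[of "sphere 0 1"]) (auto simp: negligible_iff_null_sets)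
  then have pointwise: "AE t in lebesgue.
    ennreal (?w t * h (inversion t)) \<le> ennreal (M \<bar>kelvinV f t\<bar>) * indicator (ball 0 1) t"
  proof (rule AE_mp, intro AE_I2 impI)
    fix t :: 'a
    assume "norm t \<noteq> 1"
    then consider "t = 0" | "1 < norm t" | "t \<noteq> 0" "norm t < 1"
      by fastforce
    then show "ennreal (?w t * h (inversion t))
        \<le> ennreal (M \<bar>kelvinV f t\<bar>) * indicator (ball 0 1) t"
    proof cases
      case 2
      then have "h (inversion t) = 0"
        by (simp add: h_def indicator_def divide_less_eq)
      then show ?thesis
        by simp
    next
      case 3
      have "norm t powr 0 \<le> ?w t"
        using 3 by (intro powr_mono') auto
      then have "?w t * M \<bar>f (inversion t)\<bar> \<le> M (?w t * \<bar>f (inversion t)\<bar>)"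
        using 3 by (intro M_superhomogeneous) auto
      moreover have "1 < norm (inversion t)"
        using 3 by (simp add: less_divide_eq)
      ultimately show ?thesis
        using 3 by (simp add: h_def kelvinV_eq_inversion abs_mult ennreal_leI)
    qed simp
  qed
  have "(\<integral>\<^sup>+x\<in>- ball 0 1. ennreal (M \<bar>f x\<bar>) \<partial>lebesgue) = (\<integral>\<^sup>+x. h x \<partial>lebesgue)"
    by (intro nn_integral_cong) (simp add: h_def indicator_def)
  also have "\<dots> \<le> (\<integral>\<^sup>+t. ennreal (?w t * h (inversion t)) \<partial>lebesgue)"
    using h_measurable h_nonneg by (rule nn_integral_le_inversion)
  also have "\<dots> \<le> (\<integral>\<^sup>+t\<in>ball 0 1. ennreal (M \<bar>kelvinV f t\<bar>) \<partial>lebesgue)"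
    using pointwise by (rule nn_integral_mono_AE)
  finally show ?thesis .
qed

lemma luxemburg_norm_kelvinV_le:
  fixes f :: "'a::euclidean_space \<Rightarrow> real" and M :: "real \<Rightarrow> real"
  assumes M_borel: "M \<in> borel_measurable borel"
    and M_nonneg: "\<And>t. 0 \<le> t \<Longrightarrow> 0 \<le> M t"
    and M_superhomogeneous: "\<And>s t. 1 \<le> s \<Longrightarrow> 0 \<le> t \<Longrightarrow> s * M t \<le> M (s * t)"
    and f: "f \<in> borel_measurable (lebesgue_on (- ball 0 1))"
  shows "luxemburg_norm M (- ball 0 1) f \<le> luxemburg_norm M (ball 0 1) (kelvinV f)"
  unfolding luxemburg_norm_def
proof (rule Inf_superset_mono, clarify)
  fix l :: real
  assume l: "0 < l"
    and unit: "(\<integral>\<^sup>+t\<in>ball 0 1. ennreal (M (\<bar>kelvinV f t\<bar> / l)) \<partial>lebesgue) \<le> 1"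
  have "(\<integral>\<^sup>+x\<in>- ball 0 1. ennreal (M (\<bar>f x\<bar> / l)) \<partial>lebesgue)
    \<le> (\<integral>\<^sup>+t\<in>ball 0 1. ennreal (M (\<bar>kelvinV f t\<bar> / l)) \<partial>lebesgue)"
  proof (rule nn_integral_kelvinV_le[where M = "\<lambda>t. M (t / l)", OF _ _ _ f])
    show "(\<lambda>t. M (t / l)) \<in> borel_measurable borel"
      using M_borel by measurable
    show "0 \<le> M (t / l)" if "0 \<le> t" for t
      using that l by (simp add: M_nonneg)
    show "s * M (t / l) \<le> M (s * t / l)" if "1 \<le> s" "0 \<le> t" for s t
      using M_superhomogeneous[of s "t / l"] that l by simp
  qed
  with l unit show "\<exists>l'. ennreal l = ennreal l' \<and> 0 < l'
      \<and> (\<integral>\<^sup>+x\<in>- ball 0 1. ennreal (M (\<bar>f x\<bar> / l')) \<partial>lebesgue) \<le> 1"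
    by (blast intro: order_trans)
qed

lemma orlicz_M_nonneg: "0 \<le> t \<Longrightarrow> 0 \<le> orlicz_M t"
  unfolding orlicz_M_def by (simp add: add_increasing2)

lemma orlicz_M_superhomogeneous:
  assumes "1 \<le> s" "0 \<le> t"
  shows "s * orlicz_M t \<le> orlicz_M (s * t)"
proof -
  have "ln (exp 1 + t) \<le> ln (exp 1 + s * t)"
    using assms by (simp add: add_pos_nonneg mult_le_cancel_right1)
  then have "(s * t) * ln (exp 1 + t) \<le> (s * t) * ln (exp 1 + s * t)"
    using assms by (intro mult_left_mono) auto
  then show ?thesis
    by (simp add: orlicz_M_def mult.assoc)
qed

theorem lemmaA2:
  fixes f :: "'a::euclidean_space \<Rightarrow> real"
  assumes "f \<in> borel_measurable (lebesgue_on (- ball 0 1))"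
  shows "luxemburg_norm orlicz_M (- ball 0 1) f \<le> luxemburg_norm orlicz_M (ball 0 1) (kelvinV f)"
proof (rule luxemburg_norm_kelvinV_le[OF _ orlicz_M_nonneg orlicz_M_superhomogeneous assms])
  show "orlicz_M \<in> borel_measurable borel"
    unfolding orlicz_M_def[abs_def] by measurable
qed

end
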